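(* Let $d=1$, constants $0<c_1<1$, $c_2,c_3>0$, and $C^1$ functions $b_1:\mathbb R^2\to\mathbb R$, $b_2,f_1:\mathbb R\to\mathbb R$. Let $$b(x,a,\mathcal L_{(\xi,\alpha)})=-a+b_1(\mathbb E[\xi],\mathbb E[\alpha])+b_2(x),\quad f(x,a,\mathcal L_{(\xi,\alpha)})=\tfrac{|a|^2}{2}-c_1a\,\mathbb E[\alpha]+c_2x\,\mathbb E[\xi]+c_3x\,\mathbb E[\alpha]+f_1(x).$$ Set $\hat c_1:=\frac{c_1}{1-c_1}$, $\bar c_1:=\frac1{1-c_1}$, $\hat c_3:=\frac{c_3}{1-c_1}$, and assume that for all $(m_1,m_2)\in\mathbb R^2$ the symmetric matrix $$\begin{bmatrix}1-[\bar c_1\partial_{m_2}b_1-\hat c_1]&0&\frac12[\hat c_3-\partial_{m_1}b_1]\\0&\bar c_1\partial_{m_2}b_1-\hat c_1&\frac12[\hat c_3+\partial_{m_1}b_1]\\\frac12[\hat c_3-\partial_{m_1}b_1]&\frac12[\hat c_3+\partial_{m_1}b_1]&c_2\end{bmatrix}$$ (derivatives of $b_1$ evaluated at $(m_1,m_2)$) is positive semidefinite. Then Assumption (F) holds with $\Phi(\mathcal L_{(\xi,\eta)})=\mathcal L_{(\xi,\hat c_1\mathbb E[\eta]+\eta)}$, and $$\widehat H(x,p,\mathcal L_{(\xi,\eta)})=-\tfrac12|\hat c_1\mathbb E[\eta]+p|^2+p[b_1(\mathbb E[\xi],\bar c_1\mathbb E[\eta])+b_2(x)]+c_2x\mathbb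 E[\xi]+\hat c_3x\mathbb E[\eta]+f_1(x)$$ satisfies condition (LL-H): for all $\xi,\eta,\gamma,\zeta\in L^2(\mathcal F^1_T)$ and Lipschitz $\varphi$, $$\tilde{\mathbb E}\Big[\langle\zeta,\widehat H_{pp}(\xi)\zeta\rangle-\big\langle\eta,\widehat H_{x\rho_1}(\xi,\tilde\xi)\tilde\eta+\widehat H_{x\rho_2}(\xi,\tilde\xi)[\tilde\gamma+\tilde\zeta]\big\rangle-\big\langle\gamma-\zeta,\widehat H_{p\rho_1}(\xi,\tilde\xi)\tilde\eta+\widehat H_{p\rho_2}(\xi,\tilde\xi)[\tilde\gamma+\tilde\zeta]\big\rangle\Big]\le0.$$
   Context: Hamiltonian $H(x,p,\nu):=\inf_a[p\,b(x,a,\nu)+f(x,a,\nu)]$. Assumption (F): (i) unique minimizer $\phi(x,p,\nu)$; (ii) for all $\xi\in L^2(\mathcal F)$, $\eta\in L^2(\sigma(\xi))$ the map $\nu\mapsto\mathcal L_{(\xi,\phi(\xi,\eta,\nu))}$ has a unique fixed point $\Phi(\mathcal L_{(\xi,\eta)})$. $\widehat H(x,p,\rho):=H(x,p,\Phi(\rho))$; $\partial_{\rho_1},\partial_{\rho_2}$ are the components of the Lions derivative in $\rho\in\mathcal P_2(\mathbb R^2)$ at a point $(\tilde x,\tilde p)$ w.r.t. $\tilde x$ and $\tilde p$. Shorthand: with $\rho:=\mathcal L_{(\xi,\varphi(\xi))}$, $\widehat H_{pp}(x):=\partial_{pp}\widehat H(x,\varphi(x),\rho)$, $\widehat H_{a\rho_i}(x,\tilde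 x):=\partial_a\partial_{\rho_i}\widehat H(x,\varphi(x),\rho,\tilde x,\varphi(\tilde x))$ for $a\in\{x,p\}$. $\tilde\xi$ etc. denote independent copies on an extended probability space and $\tilde{\mathbb E}$ the expectation there; $\mathcal F^1_T$ is the $\sigma$-algebra of the idiosyncratic probability space (atomless). *)

theory Defs
  imports "HOL-Probability.Probability"
begin

definition L2 :: "'w measure \<Rightarrow> ('w \<Rightarrow> real) \<Rightarrow> bool" where
  "L2 M X \<longleftrightarrow> X \<in> borel_measurable M \<and> integrable M (\<lambda>\<omega>. (X \<omega>)\<^sup>2)"

definition L2_sigma :: "'w measure \<Rightarrow> ('w \<Rightarrow> real) \<Rightarrow> ('w \<Rightarrow> real) \<Rightarrow> bool" where
  "L2_sigma M \<xi> \<eta> \<longleftrightarrow> L2 M \<eta> \<and> \<eta> \<in> borel_measurable (vimage_algebra (space M) \<xi> borel)"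

definition L2v :: "'w measure \<Rightarrow> ('w \<Rightarrow> real \<times> real) \<Rightarrow> bool" where
  "L2v M X \<longleftrightarrow> X \<in> borel_measurable M \<and> integrable M (\<lambda>\<omega>. (norm (X \<omega>))\<^sup>2)"

definition L2norm :: "'w measure \<Rightarrow> ('w \<Rightarrow> real \<times> real) \<Rightarrow> real" where
  "L2norm M X = sqrt (integral\<^sup>L M (\<lambda>\<omega>. (norm (X \<omega>))\<^sup>2))"

definition P2 :: "(real \<times> real) measure \<Rightarrow> bool" where
  "P2 \<nu> \<longleftrightarrow> prob_space \<nu> \<and> sets \<nu> = sets borel \<and> integrable \<nu> (\<lambda>z. (norm z)\<^sup>2)"

definition law :: "'w measure \<Rightarrow> ('w \<Rightarrow> real \<times> real) \<Rightarrow> (real \<times> real) measure" where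
  "law M X = distr M borel X"

definition mean1 :: "(real \<times> real) measure \<Rightarrow> real" where
  "mean1 \<nu> = integral\<^sup>L \<nu> fst"
definition mean2 :: "(real \<times> real) measure \<Rightarrow> real" where
  "mean2 \<nu> = integral\<^sup>L \<nu> snd"

definition atomless :: "'w measure \<Rightarrow> bool" where
  "atomless M \<longleftrightarrow> (\<forall>A\<in>sets M. 0 < measure M A \<longrightarrow>
      (\<exists>B\<in>sets M. B \<subseteq> A \<and> 0 < measure M B \<and> measure M B < measure M A))"

text \<open>g is a Lions derivative of U at rho (computed on the atomless space M):
  the lift X \<mapsto> U(law X) is Frechet differentiable on L^2(M;R^2) at every X with law rho,
  with derivative Y \<mapsto> E[g(X) . Y].\<close>
definition lions_deriv :: "'w measure \<Rightarrow> ((real \<times> real) measure \<Rightarrow> real) \<Rightarrow> (real \<times> real) measure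
    \<Rightarrow> (real \<times> real \<Rightarrow> real \<times> real) \<Rightarrow> bool" where
  "lions_deriv M U \<rho> g \<longleftrightarrow> g \<in> borel_measurable borel \<and> integrable \<rho> (\<lambda>z. (norm (g z))\<^sup>2) \<and>
     (\<forall>X. L2v M X \<and> law M X = \<rho> \<longrightarrow>
        (\<forall>\<epsilon>>0. \<exists>\<delta>>0. \<forall>Y. L2v M Y \<and> L2norm M Y < \<delta> \<longrightarrow>
            \<bar>U (law M (\<lambda>\<omega>. X \<omega> + Y \<omega>)) - U \<rho> - integral\<^sup>L M (\<lambda>\<omega>. g (X \<omega>) \<bullet> Y \<omega>)\<bar>
              \<le> \<epsilon> * L2norm M Y))"

type_synonym coeff = "real \<Rightarrow> real \<Rightarrow> (real \<times> real) measure \<Rightarrow> real"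

definition Ham :: "coeff \<Rightarrow> coeff \<Rightarrow> real \<Rightarrow> real \<Rightarrow> (real \<times> real) measure \<Rightarrow> real" where
  "Ham b f x p \<nu> = (INF a. p * b x a \<nu> + f x a \<nu>)"

definition is_minimizer :: "coeff \<Rightarrow> coeff \<Rightarrow> real \<Rightarrow> real \<Rightarrow> (real \<times> real) measure \<Rightarrow> real \<Rightarrow> bool" where
  "is_minimizer b f x p \<nu> a \<longleftrightarrow> (\<forall>a'. p * b x a \<nu> + f x a \<nu> \<le> p * b x a' \<nu> + f x a' \<nu>)"

definition minimizer :: "coeff \<Rightarrow> coeff \<Rightarrow> real \<Rightarrow> real \<Rightarrow> (real \<times> real) measure \<Rightarrow> real" where
  "minimizer b f x p \<nu> = (THE a. is_minimizer b f x p \<nu> a)"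

definition is_fixed_point :: "'w measure \<Rightarrow> coeff \<Rightarrow> coeff \<Rightarrow> ('w \<Rightarrow> real) \<Rightarrow> ('w \<Rightarrow> real)
    \<Rightarrow> (real \<times> real) measure \<Rightarrow> bool" where
  "is_fixed_point M b f \<xi> \<eta> \<nu> \<longleftrightarrow>
     P2 \<nu> \<and> \<nu> = law M (\<lambda>\<omega>. (\<xi> \<omega>, minimizer b f (\<xi> \<omega>) (\<eta> \<omega>) \<nu>))"

definition assumption_F :: "'w measure \<Rightarrow> coeff \<Rightarrow> coeff \<Rightarrow> bool" where
  "assumption_F M b f \<longleftrightarrow>
     (\<forall>x p \<nu>. P2 \<nu> \<longrightarrow> (\<exists>!a. is_minimizer b f x p \<nu> a)) \<and>
     (\<forall>\<xi> \<eta>. L2 M \<xi> \<and> L2_sigma M \<xi> \<eta> \<longrightarrow> (\<exists>!\<nu>. is_fixed_point M b f \<xi> \<eta> \<nu>))"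

definition PhiF :: "'w measure \<Rightarrow> coeff \<Rightarrow> coeff \<Rightarrow> ('w \<Rightarrow> real) \<Rightarrow> ('w \<Rightarrow> real) \<Rightarrow> (real \<times> real) measure" where
  "PhiF M b f \<xi> \<eta> = (THE \<nu>. is_fixed_point M b f \<xi> \<eta> \<nu>)"

text \<open>Admissible versions DH of the Lions derivative of Hh(x,p,.) at rho: for every (x,p),
  DH x p is a Lions derivative; DH is jointly Borel in (x,p,x~,p~) and differentiable in x and in p.
  The two components of DH x p y are the derivatives w.r.t. x~ (rho_1) and p~ (rho_2).\<close>
definition admissible_LD :: "'w measure \<Rightarrow> (real \<Rightarrow> real \<Rightarrow> (real \<times> real) measure \<Rightarrow> real)
    \<Rightarrow> (real \<times> real) measure \<Rightarrow> (real \<Rightarrow> real \<Rightarrow> real \<times> real \<Rightarrow> real \<times> real) \<Rightarrow> bool" where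
  "admissible_LD M Hh \<rho> DH \<longleftrightarrow>
     (\<forall>x p. lions_deriv M (Hh x p) \<rho> (DH x p)) \<and>
     (\<lambda>(x, p, y). DH x p y) \<in> borel_measurable borel \<and>
     (\<forall>x p y. (\<lambda>x'. DH x' p y) differentiable (at x) \<and> (\<lambda>p'. DH x p' y) differentiable (at p))"

definition LLH :: "'w measure \<Rightarrow> (real \<Rightarrow> real \<Rightarrow> (real \<times> real) measure \<Rightarrow> real) \<Rightarrow> bool" where
  "LLH M Hh \<longleftrightarrow>
     (\<forall>\<xi> \<eta> \<gamma> \<zeta> (\<phi>::real \<Rightarrow> real).
        L2 M \<xi> \<and> L2 M \<eta> \<and> L2 M \<gamma> \<and> L2 M \<zeta> \<and> (\<exists>K. K-lipschitz_on UNIV \<phi>) \<longrightarrow>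
        (let \<rho> = law M (\<lambda>\<omega>. (\<xi> \<omega>, \<phi> (\<xi> \<omega>))) in
          (\<exists>DH. admissible_LD M Hh \<rho> DH) \<and>
          (\<forall>DH. admissible_LD M Hh \<rho> DH \<longrightarrow>
             integral\<^sup>L (M \<Otimes>\<^sub>M M) (\<lambda>(\<omega>, \<omega>').
               (let x = \<xi> \<omega>; p = \<phi> x; y' = (\<xi> \<omega>', \<phi> (\<xi> \<omega>'));
                    Hpp = deriv (deriv (\<lambda>p'. Hh x p' \<rho>)) p;
                    Hxr1 = deriv (\<lambda>x'. fst (DH x' p y')) x;
                    Hxr2 = deriv (\<lambda>x'. snd (DH x' p y')) x;
                    Hpr1 = deriv (\<lambda>p'. fst (DH x p' y')) p;
                    Hpr2 = deriv (\<lambda>p'. snd (DH x p' y')) p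
                in \<zeta> \<omega> * Hpp * \<zeta> \<omega>
                   - \<eta> \<omega> * (Hxr1 * \<eta> \<omega>' + Hxr2 * (\<gamma> \<omega>' + \<zeta> \<omega>'))
                   - (\<gamma> \<omega> - \<zeta> \<omega>) * (Hpr1 * \<eta> \<omega>' + Hpr2 * (\<gamma> \<omega>' + \<zeta> \<omega>')))) \<le> 0)))"

definition bEx :: "(real \<times> real \<Rightarrow> real) \<Rightarrow> (real \<Rightarrow> real) \<Rightarrow> coeff" where
  "bEx b1 b2 x a \<nu> = - a + b1 (mean1 \<nu>, mean2 \<nu>) + b2 x"

definition fEx :: "real \<Rightarrow> real \<Rightarrow> real \<Rightarrow> (real \<Rightarrow> real) \<Rightarrow> coeff" where
  "fEx c1 c2 c3 f1 x a \<nu> = \<bar>a\<bar>\<^sup>2 / 2 - c1 * a * mean2 \<nu> + c2 * x * mean1 \<nu> + c3 * x * mean2 \<nu> + f1 x"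

definition HhatEx :: "real \<Rightarrow> real \<Rightarrow> real \<Rightarrow> (real \<times> real \<Rightarrow> real) \<Rightarrow> (real \<Rightarrow> real) \<Rightarrow> (real \<Rightarrow> real)
    \<Rightarrow> real \<Rightarrow> real \<Rightarrow> (real \<times> real) measure \<Rightarrow> real" where
  "HhatEx c1 c2 c3 b1 b2 f1 x p \<rho> =
     (let ch1 = c1 / (1 - c1); cb1 = 1 / (1 - c1); ch3 = c3 / (1 - c1) in
      - (1/2) * \<bar>ch1 * mean2 \<rho> + p\<bar>\<^sup>2 + p * (b1 (mean1 \<rho>, cb1 * mean2 \<rho>) + b2 x)
      + c2 * x * mean1 \<rho> + ch3 * x * mean2 \<rho> + f1 x)"

definition psd3 :: "real^3^3 \<Rightarrow> bool" where
  "psd3 A \<longleftrightarrow> (\<forall>v. 0 \<le> v \<bullet> (A *v v))"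

definition matEx :: "real \<Rightarrow> real \<Rightarrow> real \<Rightarrow> real \<Rightarrow> real \<Rightarrow> real^3^3" where
  "matEx c1 c2 c3 D1 D2 =
     (let ch1 = c1 / (1 - c1); cb1 = 1 / (1 - c1); ch3 = c3 / (1 - c1) in
      vector [vector [1 - (cb1 * D2 - ch1), 0, (ch3 - D1) / 2],
              vector [0, cb1 * D2 - ch1, (ch3 + D1) / 2],
              vector [(ch3 - D1) / 2, (ch3 + D1) / 2, c2]])"

end

theory Submission
  imports Defs
begin

text \<open>
  Completing the square in \<open>a\<close> shows that the unique minimiser is \<open>a = p + c\<^sub>1 E[\<alpha>]\<close>, so the
  fixed point equation for \<open>\<nu>\<close> only constrains the second mean of \<open>\<nu>\<close>, which must be
  \<open>E[\<eta>]/(1 - c\<^sub>1)\<close>; this gives \<open>\<Phi>\<close> and \<open>Hhat\<close>.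

  \<open>Hhat\<close> depends on \<open>\<rho>\<close> only through its two means, so its Lions derivative has a version that
  is constant in the state variable: the gradient with respect to the means. Lions derivatives are
  unique almost everywhere with respect to \<open>\<rho>\<close>, and the partial derivatives in \<open>(x, p)\<close> of an
  admissible version are determined by its values on a sequence, so every admissible version gives
  the same integrand almost everywhere. For the constant version the integrand is a sum of
  products of functions of the two independent copies; its expectation is minus the variance of
  \<open>\<zeta>\<close> minus the quadratic form of the given positive semidefinite matrix at
  \<open>(E[\<zeta>], E[\<gamma>], E[\<eta>])\<close>.
\<close>

lemma (in pair_sigma_finite) integrable_mult_fst_snd:
  fixes f :: "'a \<Rightarrow> real" and g :: "'b \<Rightarrow> real"
  assumes f: "integrable M1 f" and g: "integrable M2 g"
  shows "integrable (M1 \<Otimes>\<^sub>M M2) (\<lambda>z. f (fst z) * g (snd z))"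
proof (rule Fubini_integrable)
  have [measurable]: "f \<in> borel_measurable M1" "g \<in> borel_measurable M2"
    using f g by auto
  show "(\<lambda>z. f (fst z) * g (snd z)) \<in> borel_measurable (M1 \<Otimes>\<^sub>M M2)"
    by measurable
  show "integrable M1 (\<lambda>x. \<integral>y. norm (f (fst (x, y)) * g (snd (x, y))) \<partial>M2)"
    using f by (simp add: abs_mult)
  show "AE x in M1. integrable M2 (\<lambda>y. f (fst (x, y)) * g (snd (x, y)))"
    using g by simp
qed

lemma (in pair_sigma_finite) integral_mult_fst_snd:
  fixes f :: "'a \<Rightarrow> real" and g :: "'b \<Rightarrow> real"
  assumes "integrable M1 f" and "integrable M2 g"
  shows "(\<integral>z. f (fst z) * g (snd z) \<partial>(M1 \<Otimes>\<^sub>M M2)) = integral\<^sup>L M1 f * integral\<^sup>L M2 g"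
  using integral_fst'[OF integrable_mult_fst_snd[OF assms]] by simp

text \<open>The integrand need not be measurable; if it is not, its integral is 0 by convention.\<close>
lemma integral_nonpos_if_AE_eq:
  fixes f g :: "'a \<Rightarrow> real"
  assumes "AE x in M. f x = g x" and "g \<in> borel_measurable M" and "integral\<^sup>L M g \<le> 0"
  shows "integral\<^sup>L M f \<le> 0"
proof (cases "f \<in> borel_measurable M")
  case True
  with assms show ?thesis
    using integral_cong_AE[of f M g] by simp
next
  case False
  then have "\<not> integrable M f"
    by auto
  then show ?thesis
    by (simp add: not_integrable_integral_eq)
qed

lemma measurable_fst_borel [measurable]:
  "fst \<in> borel_measurable (borel :: ('a::second_countable_topology \<times> 'b::second_countable_topology) measure)"
  by (simp add: borel_measurable_continuous_onI continuous_on_fst)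

lemma measurable_snd_borel [measurable]:
  "snd \<in> borel_measurable (borel :: ('a::second_countable_topology \<times> 'b::second_countable_topology) measure)"
  by (simp add: borel_measurable_continuous_onI continuous_on_snd)

lemma L2_borel_measurable: "L2 M X \<Longrightarrow> X \<in> borel_measurable M"
  by (simp add: L2_def)

lemma L2_integrable_square: "L2 M X \<Longrightarrow> integrable M (\<lambda>\<omega>. (X \<omega>)\<^sup>2)"
  by (simp add: L2_def)

lemma (in finite_measure) L2_integrable: "L2 M X \<Longrightarrow> integrable M X"
  by (simp add: L2_def square_integrable_imp_integrable)

lemma (in finite_measure) L2_lipschitz_comp:
  assumes X: "L2 M X" and \<phi>: "K-lipschitz_on UNIV \<phi>"
  shows "L2 M (\<lambda>\<omega>. \<phi> (X \<omega>))"
proof -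
  have [measurable]: "X \<in> borel_measurable M"
    using X by (rule L2_borel_measurable)
  have [measurable]: "\<phi> \<in> borel_measurable borel"
    using lipschitz_on_continuous_on[OF \<phi>] by (rule borel_measurable_continuous_onI)
  have sum_sq: "(a + b)\<^sup>2 \<le> 2 * a\<^sup>2 + 2 * b\<^sup>2" for a b :: real
    using sum_squares_bound[of a b] by (simp add: power2_sum)
  have bound: "(\<phi> t)\<^sup>2 \<le> 2 * (\<phi> 0)\<^sup>2 + 2 * K\<^sup>2 * t\<^sup>2" for t
  proof -
    have "\<bar>\<phi> t - \<phi> 0\<bar> \<le> K * \<bar>t\<bar>"
      using lipschitz_onD[OF \<phi>, of t 0] by (simp add: dist_real_def)
    then have "(\<phi> t - \<phi> 0)\<^sup>2 \<le> K\<^sup>2 * t\<^sup>2"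
      by (metis abs_ge_zero power2_abs power_mono power_mult_distrib)
    then show ?thesis
      using sum_sq[of "\<phi> t - \<phi> 0" "\<phi> 0"] by simp
  qed
  have "integrable M (\<lambda>\<omega>. (\<phi> (X \<omega>))\<^sup>2)"
  proof (rule Bochner_Integration.integrable_bound)
    show "integrable M (\<lambda>\<omega>. 2 * (\<phi> 0)\<^sup>2 + 2 * K\<^sup>2 * (X \<omega>)\<^sup>2)"
      using L2_integrable_square[OF X] by simp
    show "AE \<omega> in M. norm ((\<phi> (X \<omega>))\<^sup>2) \<le> norm (2 * (\<phi> 0)\<^sup>2 + 2 * K\<^sup>2 * (X \<omega>)\<^sup>2)"
      using bound by (intro AE_I2) (auto intro: order_trans)
  qed measurable
  then show ?thesis
    by (simp add: L2_def)
qed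

lemma (in finite_measure) L2_add_const: "L2 M X \<Longrightarrow> L2 M (\<lambda>\<omega>. c + X \<omega>)"
  by (rule L2_lipschitz_comp[of _ 1]) (auto intro: lipschitz_onI simp: dist_real_def)

lemma L2v_Pair:
  assumes X: "L2 M X" and Y: "L2 M Y"
  shows "L2v M (\<lambda>\<omega>. (X \<omega>, Y \<omega>))"
proof -
  have [measurable]: "X \<in> borel_measurable M" "Y \<in> borel_measurable M"
    using X Y by (simp_all add: L2_borel_measurable)
  have "integrable M (\<lambda>\<omega>. (X \<omega>)\<^sup>2 + (Y \<omega>)\<^sup>2)"
    using X Y by (simp add: L2_integrable_square)
  moreover have "(\<lambda>\<omega>. (X \<omega>, Y \<omega>)) \<in> borel_measurable M"
    by measurable
  ultimately show ?thesis
    by (simp add: L2v_def norm_Pair)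
qed

lemma L2v_integrable_inner:
  assumes A: "L2v M A" and B: "L2v M B"
  shows "integrable M (\<lambda>\<omega>. A \<omega> \<bullet> B \<omega>)"
proof (rule Bochner_Integration.integrable_bound)
  show "integrable M (\<lambda>\<omega>. (norm (A \<omega>))\<^sup>2 + (norm (B \<omega>))\<^sup>2)"
    using A B by (simp add: L2v_def)
  have [measurable]: "A \<in> borel_measurable M" "B \<in> borel_measurable M"
    using A B by (simp_all add: L2v_def)
  show "(\<lambda>\<omega>. A \<omega> \<bullet> B \<omega>) \<in> borel_measurable M"
    by measurable
  have "\<bar>A \<omega> \<bullet> B \<omega>\<bar> \<le> (norm (A \<omega>))\<^sup>2 + (norm (B \<omega>))\<^sup>2" for \<omega>
  proof -
    have "\<bar>A \<omega> \<bullet> B \<omega>\<bar> \<le> norm (A \<omega>) * norm (B \<omega>)"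
      by (rule Cauchy_Schwarz_ineq2)
    also have "\<dots> \<le> (norm (A \<omega>))\<^sup>2 + (norm (B \<omega>))\<^sup>2"
      using sum_squares_bound[of "norm (A \<omega>)" "norm (B \<omega>)"]
        mult_nonneg_nonneg[OF norm_ge_zero norm_ge_zero, of "A \<omega>" "B \<omega>"] by linarith
    finally show ?thesis .
  qed
  then show "AE \<omega> in M. norm (A \<omega> \<bullet> B \<omega>) \<le> norm ((norm (A \<omega>))\<^sup>2 + (norm (B \<omega>))\<^sup>2)"
    by (intro AE_I2) simp
qed

lemma L2v_diff:
  assumes A: "L2v M A" and B: "L2v M B"
  shows "L2v M (\<lambda>\<omega>. A \<omega> - B \<omega>)"
proof -
  have [measurable]: "A \<in> borel_measurable M" "B \<in> borel_measurable M"
    using A B by (simp_all add: L2v_def)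
  have "integrable M (\<lambda>\<omega>. (norm (A \<omega> - B \<omega>))\<^sup>2)"
  proof (rule Bochner_Integration.integrable_bound)
    show "integrable M (\<lambda>\<omega>. 2 * (norm (A \<omega>))\<^sup>2 + 2 * (norm (B \<omega>))\<^sup>2)"
      using A B by (simp add: L2v_def)
    have "(norm (A \<omega> - B \<omega>))\<^sup>2 \<le> 2 * (norm (A \<omega>))\<^sup>2 + 2 * (norm (B \<omega>))\<^sup>2" for \<omega>
    proof -
      have "(norm (A \<omega> - B \<omega>))\<^sup>2 \<le> (norm (A \<omega>) + norm (B \<omega>))\<^sup>2"
        by (intro power_mono norm_triangle_ineq4) simp
      then show ?thesis
        using sum_squares_bound[of "norm (A \<omega>)" "norm (B \<omega>)"] by (simp add: power2_sum)
    qed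
    then show "AE \<omega> in M. norm ((norm (A \<omega> - B \<omega>))\<^sup>2) \<le> norm (2 * (norm (A \<omega>))\<^sup>2 + 2 * (norm (B \<omega>))\<^sup>2)"
      by (intro AE_I2) simp
  qed measurable
  then show ?thesis
    by (simp add: L2v_def)
qed

lemma (in finite_measure) L2v_integrable_norm:
  assumes "L2v M Y"
  shows "integrable M (\<lambda>\<omega>. norm (Y \<omega>))"
proof -
  have [measurable]: "Y \<in> borel_measurable M"
    using assms by (simp add: L2v_def)
  have "(\<lambda>\<omega>. norm (Y \<omega>)) \<in> borel_measurable M"
    by measurable
  from square_integrable_imp_integrable[OF this] show ?thesis
    using assms by (simp add: L2v_def)
qed

lemma (in finite_measure) L2v_integrable: "L2v M Y \<Longrightarrow> integrable M Y"
  using L2v_integrable_norm[of Y] integrable_norm_iff[of Y M] by (simp add: L2v_def)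

lemma (in prob_space) norm_integral_le_L2norm:
  assumes Y: "L2v M Y"
  shows "norm (integral\<^sup>L M Y) \<le> L2norm M Y"
proof -
  have int: "integrable M (\<lambda>\<omega>. norm (Y \<omega>))"
    using Y by (rule L2v_integrable_norm)
  have sq: "integrable M (\<lambda>\<omega>. (norm (Y \<omega>))\<^sup>2)"
    using Y by (simp add: L2v_def)
  have "(norm (integral\<^sup>L M Y))\<^sup>2 \<le> (expectation (\<lambda>\<omega>. norm (Y \<omega>)))\<^sup>2"
    by (rule power_mono[OF integral_norm_bound norm_ge_zero])
  also have "\<dots> \<le> expectation (\<lambda>\<omega>. (norm (Y \<omega>))\<^sup>2)"
    using variance_eq[OF int sq] variance_positive[of "\<lambda>\<omega>. norm (Y \<omega>)"] by simp
  finally show ?thesis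
    unfolding L2norm_def by (rule real_le_rsqrt)
qed

lemma (in prob_space) P2_law:
  assumes "L2v M Z"
  shows "P2 (law M Z)"
proof -
  have [measurable]: "Z \<in> borel_measurable M"
    using assms by (simp add: L2v_def)
  show ?thesis
    using assms unfolding P2_def law_def L2v_def
    by (simp add: prob_space_distr integrable_distr_eq)
qed

lemma mean1_law: "Z \<in> borel_measurable M \<Longrightarrow> mean1 (law M Z) = (\<integral>\<omega>. fst (Z \<omega>) \<partial>M)"
  by (simp add: mean1_def law_def integral_distr)

lemma mean2_law: "Z \<in> borel_measurable M \<Longrightarrow> mean2 (law M Z) = (\<integral>\<omega>. snd (Z \<omega>) \<partial>M)"
  by (simp add: mean2_def law_def integral_distr)

lemma means_law: "integrable M Z \<Longrightarrow> (mean1 (law M Z), mean2 (law M Z)) = integral\<^sup>L M Z"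
  by (simp add: mean1_law mean2_law prod_eq_iff)

lemma mean1_law_Pair:
  "X \<in> borel_measurable M \<Longrightarrow> Y \<in> borel_measurable M \<Longrightarrow> mean1 (law M (\<lambda>\<omega>. (X \<omega>, Y \<omega>))) = integral\<^sup>L M X"
  by (subst mean1_law) simp_all

lemma mean2_law_Pair:
  "X \<in> borel_measurable M \<Longrightarrow> Y \<in> borel_measurable M \<Longrightarrow> mean2 (law M (\<lambda>\<omega>. (X \<omega>, Y \<omega>))) = integral\<^sup>L M Y"
  by (subst mean2_law) simp_all

text \<open>Testing the functional \<open>Y \<mapsto> E[D \<cdot> Y]\<close> with \<open>Y = t D\<close> gives \<open>\<parallel>D\<parallel>\<^sub>2 \<le> \<epsilon>\<close> for every \<open>\<epsilon> > 0\<close>.\<close>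
lemma AE_zero_if_inner_integral_little_o:
  fixes D :: "'a \<Rightarrow> real \<times> real"
  assumes D: "L2v M D"
    and small: "\<And>\<epsilon>. 0 < \<epsilon> \<Longrightarrow> \<exists>\<delta>>0. \<forall>Y. L2v M Y \<and> L2norm M Y < \<delta> \<longrightarrow>
                   \<bar>\<integral>\<omega>. D \<omega> \<bullet> Y \<omega> \<partial>M\<bar> \<le> \<epsilon> * L2norm M Y"
  shows "AE \<omega> in M. D \<omega> = 0"
proof -
  have [measurable]: "D \<in> borel_measurable M" and sq: "integrable M (\<lambda>\<omega>. (norm (D \<omega>))\<^sup>2)"
    using D by (auto simp: L2v_def)
  define N where "N = L2norm M D"
  have N_sq: "N\<^sup>2 = (\<integral>\<omega>. (norm (D \<omega>))\<^sup>2 \<partial>M)"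
    by (simp add: N_def L2norm_def integral_nonneg_AE)
  have "N \<le> 0 + \<epsilon>" if \<epsilon>: "0 < \<epsilon>" for \<epsilon>
  proof (rule ccontr)
    assume "\<not> N \<le> 0 + \<epsilon>"
    then have N: "\<epsilon> < N" "0 < N"
      using \<epsilon> by auto
    obtain \<delta> where \<delta>: "0 < \<delta>" and bound: "\<forall>Y. L2v M Y \<and> L2norm M Y < \<delta> \<longrightarrow>
        \<bar>\<integral>\<omega>. D \<omega> \<bullet> Y \<omega> \<partial>M\<bar> \<le> \<epsilon> * L2norm M Y"
      using small[OF \<epsilon>] by blast
    define t where "t = \<delta> / (2 * N)"
    have t: "0 < t" "t * N < \<delta>"
      using \<delta> N by (simp_all add: t_def)
    have "L2v M (\<lambda>\<omega>. t *\<^sub>R D \<omega>)"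
      using sq by (simp add: L2v_def power_mult_distrib)
    moreover have norm_tD: "L2norm M (\<lambda>\<omega>. t *\<^sub>R D \<omega>) = t * N"
      using t by (simp add: L2norm_def N_def power_mult_distrib real_sqrt_mult)
    ultimately have "\<bar>\<integral>\<omega>. D \<omega> \<bullet> (t *\<^sub>R D \<omega>) \<partial>M\<bar> \<le> \<epsilon> * (t * N)"
      using bound t(2) by metis
    moreover have "(\<integral>\<omega>. D \<omega> \<bullet> (t *\<^sub>R D \<omega>) \<partial>M) = t * N\<^sup>2"
      by (simp add: N_sq power2_norm_eq_inner)
    ultimately have "t * N * N \<le> t * N * \<epsilon>"
      using t N by (simp add: power2_eq_square algebra_simps)
    then show False
      using t N by simp
  qed
  then have "N \<le> 0"
    by (rule field_le_epsilon)
  then have "(\<integral>\<omega>. (norm (D \<omega>))\<^sup>2 \<partial>M) = 0"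
    using N_sq N_def L2norm_def by (metis antisym real_sqrt_ge_zero power_zero_numeral zero_le_power2)
  then have "AE \<omega> in M. (norm (D \<omega>))\<^sup>2 = 0"
    using integral_nonneg_eq_0_iff_AE[OF sq] by simp
  then show ?thesis
    by simp
qed

lemma lions_derivD:
  assumes "lions_deriv M U (law M X) g" and "L2v M X" and "0 < \<epsilon>"
  obtains \<delta> where "0 < \<delta>"
    and "\<And>Y. L2v M Y \<Longrightarrow> L2norm M Y < \<delta> \<Longrightarrow>
      \<bar>U (law M (\<lambda>\<omega>. X \<omega> + Y \<omega>)) - U (law M X) - (\<integral>\<omega>. g (X \<omega>) \<bullet> Y \<omega> \<partial>M)\<bar> \<le> \<epsilon> * L2norm M Y"
proof -
  have "\<forall>\<epsilon>>0. \<exists>\<delta>>0. \<forall>Y. L2v M Y \<and> L2norm M Y < \<delta> \<longrightarrow>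
      \<bar>U (law M (\<lambda>\<omega>. X \<omega> + Y \<omega>)) - U (law M X) - (\<integral>\<omega>. g (X \<omega>) \<bullet> Y \<omega> \<partial>M)\<bar> \<le> \<epsilon> * L2norm M Y"
    using assms(1,2) unfolding lions_deriv_def by blast
  with assms(3) that show ?thesis
    by blast
qed

lemma lions_deriv_L2v_comp:
  assumes "lions_deriv M U (law M X) g" and "X \<in> borel_measurable M"
  shows "L2v M (\<lambda>\<omega>. g (X \<omega>))"
proof -
  have [measurable]: "g \<in> borel_measurable borel" "X \<in> borel_measurable M"
    using assms by (simp_all add: lions_deriv_def)
  show ?thesis
    using assms(1) integrable_distr_eq[of X M borel "\<lambda>z. (norm (g z))\<^sup>2"]
    by (simp add: lions_deriv_def law_def L2v_def)
qed

lemma lions_deriv_unique_AE: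
  assumes X: "L2v M X"
    and g1: "lions_deriv M U (law M X) g1" and g2: "lions_deriv M U (law M X) g2"
  shows "AE \<omega> in M. g1 (X \<omega>) = g2 (X \<omega>)"
proof -
  have "X \<in> borel_measurable M"
    using X by (simp add: L2v_def)
  then have X1: "L2v M (\<lambda>\<omega>. g1 (X \<omega>))" and X2: "L2v M (\<lambda>\<omega>. g2 (X \<omega>))"
    using g1 g2 by (simp_all add: lions_deriv_L2v_comp)
  have "AE \<omega> in M. g1 (X \<omega>) - g2 (X \<omega>) = 0"
  proof (rule AE_zero_if_inner_integral_little_o[OF L2v_diff[OF X1 X2]])
    fix \<epsilon> :: real
    assume "0 < \<epsilon>"
    then have \<epsilon>: "0 < \<epsilon> / 2"
      by simp
    obtain \<delta>1 where \<delta>1: "0 < \<delta>1" and lin1: "\<And>Y. L2v M Y \<Longrightarrow> L2norm M Y < \<delta>1 \<Longrightarrow>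
        \<bar>U (law M (\<lambda>\<omega>. X \<omega> + Y \<omega>)) - U (law M X) - (\<integral>\<omega>. g1 (X \<omega>) \<bullet> Y \<omega> \<partial>M)\<bar> \<le> \<epsilon> / 2 * L2norm M Y"
      using lions_derivD[OF g1 X \<epsilon>] by blast
    obtain \<delta>2 where \<delta>2: "0 < \<delta>2" and lin2: "\<And>Y. L2v M Y \<Longrightarrow> L2norm M Y < \<delta>2 \<Longrightarrow>
        \<bar>U (law M (\<lambda>\<omega>. X \<omega> + Y \<omega>)) - U (law M X) - (\<integral>\<omega>. g2 (X \<omega>) \<bullet> Y \<omega> \<partial>M)\<bar> \<le> \<epsilon> / 2 * L2norm M Y"
      using lions_derivD[OF g2 X \<epsilon>] by blast
    show "\<exists>\<delta>>0. \<forall>Y. L2v M Y \<and> L2norm M Y < \<delta> \<longrightarrow>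
        \<bar>\<integral>\<omega>. (g1 (X \<omega>) - g2 (X \<omega>)) \<bullet> Y \<omega> \<partial>M\<bar> \<le> \<epsilon> * L2norm M Y"
    proof (intro exI[of _ "min \<delta>1 \<delta>2"] conjI allI impI)
      show "0 < min \<delta>1 \<delta>2"
        using \<delta>1 \<delta>2 by simp
      fix Y
      assume Y: "L2v M Y \<and> L2norm M Y < min \<delta>1 \<delta>2"
      then have "(\<integral>\<omega>. (g1 (X \<omega>) - g2 (X \<omega>)) \<bullet> Y \<omega> \<partial>M)
          = (\<integral>\<omega>. g1 (X \<omega>) \<bullet> Y \<omega> \<partial>M) - (\<integral>\<omega>. g2 (X \<omega>) \<bullet> Y \<omega> \<partial>M)"
        unfolding inner_diff_left
        by (intro Bochner_Integration.integral_diff L2v_integrable_inner X1 X2) simp_all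
      moreover note lin1[of Y] lin2[of Y]
      ultimately show "\<bar>\<integral>\<omega>. (g1 (X \<omega>) - g2 (X \<omega>)) \<bullet> Y \<omega> \<partial>M\<bar> \<le> \<epsilon> * L2norm M Y"
        using Y unfolding abs_le_iff by simp
    qed
  qed
  then show ?thesis
    by (rule eventually_mono) simp
qed

lemma lions_deriv_of_means:
  fixes F :: "real \<times> real \<Rightarrow> real"
  assumes M: "prob_space M" and \<rho>: "finite_measure \<rho>"
    and U: "\<And>\<nu>. U \<nu> = F (mean1 \<nu>, mean2 \<nu>)"
    and F: "(F has_derivative (\<lambda>h. g \<bullet> h)) (at (mean1 \<rho>, mean2 \<rho>))"
  shows "lions_deriv M U \<rho> (\<lambda>_. g)"
  unfolding lions_deriv_def
proof (intro conjI allI impI)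
  interpret prob_space M
    by (fact M)
  show "(\<lambda>_. g) \<in> borel_measurable borel"
    by simp
  show "integrable \<rho> (\<lambda>_. (norm g)\<^sup>2)"
    using \<rho> by (simp add: finite_measure.integrable_const)
  fix X :: "'a \<Rightarrow> real \<times> real" and \<epsilon> :: real
  assume "L2v M X \<and> law M X = \<rho>" and \<epsilon>: "0 < \<epsilon>"
  then have X: "integrable M X" and \<rho>_eq: "\<rho> = law M X"
    by (auto simp: L2v_integrable)
  define m where "m = (mean1 \<rho>, mean2 \<rho>)"
  obtain \<delta> where \<delta>: "0 < \<delta>"
    and lin: "\<And>y. norm (y - m) < \<delta> \<Longrightarrow> norm (F y - F m - g \<bullet> (y - m)) \<le> \<epsilon> * norm (y - m)"
    using F \<epsilon> unfolding has_derivative_at_alt m_def by blast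
  show "\<exists>\<delta>>0. \<forall>Y. L2v M Y \<and> L2norm M Y < \<delta> \<longrightarrow>
      \<bar>U (law M (\<lambda>\<omega>. X \<omega> + Y \<omega>)) - U \<rho> - (\<integral>\<omega>. g \<bullet> Y \<omega> \<partial>M)\<bar> \<le> \<epsilon> * L2norm M Y"
  proof (intro exI[of _ \<delta>] conjI allI impI \<delta>)
    fix Y
    assume "L2v M Y \<and> L2norm M Y < \<delta>"
    then have Y: "integrable M Y" and h: "norm (integral\<^sup>L M Y) \<le> L2norm M Y" "L2norm M Y < \<delta>"
      by (auto simp: L2v_integrable norm_integral_le_L2norm)
    have m_shift: "(mean1 (law M (\<lambda>\<omega>. X \<omega> + Y \<omega>)), mean2 (law M (\<lambda>\<omega>. X \<omega> + Y \<omega>))) = m + integral\<^sup>L M Y"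
      using X Y by (simp add: means_law m_def \<rho>_eq)
    have "\<bar>F (m + integral\<^sup>L M Y) - F m - g \<bullet> integral\<^sup>L M Y\<bar> \<le> \<epsilon> * norm (integral\<^sup>L M Y)"
      using lin[of "m + integral\<^sup>L M Y"] h by simp
    also have "\<dots> \<le> \<epsilon> * L2norm M Y"
      using h \<epsilon> by simp
    finally show "\<bar>U (law M (\<lambda>\<omega>. X \<omega> + Y \<omega>)) - U \<rho> - (\<integral>\<omega>. g \<bullet> Y \<omega> \<partial>M)\<bar> \<le> \<epsilon> * L2norm M Y"
      using Y by (simp add: U m_shift flip: m_def)
  qed
qed

section \<open>Condition (LL-H) does not depend on the admissible version\<close>

lemma deriv_eq_if_eq_on_sequence:
  fixes f g :: "real \<Rightarrow> real"
  assumes "f differentiable (at x)" and "g differentiable (at x)"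
    and "f x = g x" and "\<And>n. f (x + inverse (real (Suc n))) = g (x + inverse (real (Suc n)))"
  shows "deriv f x = deriv g x"
proof -
  have quotients: "(\<lambda>n. (h (x + inverse (real (Suc n))) - h x) / (x + inverse (real (Suc n)) - x))
      \<longlonglongrightarrow> deriv h x" if "h differentiable (at x)" for h :: "real \<Rightarrow> real"
  proof -
    have "((\<lambda>y. (h y - h x) / (y - x)) \<longlongrightarrow> deriv h x) (at x)"
      using that by (simp add: DERIV_deriv_iff_real_differentiable[symmetric] has_field_derivative_iff)
    moreover have "(\<lambda>n. x + inverse (real (Suc n))) \<longlonglongrightarrow> x"
      using tendsto_add[OF tendsto_const LIMSEQ_inverse_real_of_nat] by simp
    ultimately show ?thesis
      unfolding tendsto_at_iff_sequentially comp_def by force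
  qed
  show ?thesis
    using LIMSEQ_unique[OF quotients[OF assms(1)]] quotients[OF assms(2)] assms(3,4) by simp
qed

definition LLH_integrand :: "(real \<Rightarrow> real \<Rightarrow> (real \<times> real) measure \<Rightarrow> real) \<Rightarrow> (real \<times> real) measure
    \<Rightarrow> ('w \<Rightarrow> real) \<Rightarrow> ('w \<Rightarrow> real) \<Rightarrow> ('w \<Rightarrow> real) \<Rightarrow> ('w \<Rightarrow> real) \<Rightarrow> (real \<Rightarrow> real)
    \<Rightarrow> (real \<Rightarrow> real \<Rightarrow> real \<times> real \<Rightarrow> real \<times> real) \<Rightarrow> 'w \<times> 'w \<Rightarrow> real" where
  "LLH_integrand Hh \<rho> \<xi> \<eta> \<gamma> \<zeta> \<phi> DH = (\<lambda>(\<omega>, \<omega>').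
     (let x = \<xi> \<omega>; p = \<phi> x; y' = (\<xi> \<omega>', \<phi> (\<xi> \<omega>'));
          Hpp = deriv (deriv (\<lambda>p'. Hh x p' \<rho>)) p;
          Hxr1 = deriv (\<lambda>x'. fst (DH x' p y')) x;
          Hxr2 = deriv (\<lambda>x'. snd (DH x' p y')) x;
          Hpr1 = deriv (\<lambda>p'. fst (DH x p' y')) p;
          Hpr2 = deriv (\<lambda>p'. snd (DH x p' y')) p
      in \<zeta> \<omega> * Hpp * \<zeta> \<omega>
         - \<eta> \<omega> * (Hxr1 * \<eta> \<omega>' + Hxr2 * (\<gamma> \<omega>' + \<zeta> \<omega>'))
         - (\<gamma> \<omega> - \<zeta> \<omega>) * (Hpr1 * \<eta> \<omega>' + Hpr2 * (\<gamma> \<omega>' + \<zeta> \<omega>'))))"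

lemma LLH_iff_integrand: "LLH M Hh \<longleftrightarrow>
     (\<forall>\<xi> \<eta> \<gamma> \<zeta> (\<phi>::real \<Rightarrow> real).
        L2 M \<xi> \<and> L2 M \<eta> \<and> L2 M \<gamma> \<and> L2 M \<zeta> \<and> (\<exists>K. K-lipschitz_on UNIV \<phi>) \<longrightarrow>
          (\<exists>DH. admissible_LD M Hh (law M (\<lambda>\<omega>. (\<xi> \<omega>, \<phi> (\<xi> \<omega>)))) DH) \<and>
          (\<forall>DH. admissible_LD M Hh (law M (\<lambda>\<omega>. (\<xi> \<omega>, \<phi> (\<xi> \<omega>)))) DH \<longrightarrow>
             integral\<^sup>L (M \<Otimes>\<^sub>M M) (LLH_integrand Hh (law M (\<lambda>\<omega>. (\<xi> \<omega>, \<phi> (\<xi> \<omega>)))) \<xi> \<eta> \<gamma> \<zeta> \<phi> DH) \<le> 0))"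
  unfolding LLH_def LLH_integrand_def Let_def ..

lemma admissible_LD_measurable_comp:
  assumes "admissible_LD M H \<rho> DH"
    and [measurable]: "a \<in> borel_measurable N" "b \<in> borel_measurable N" "c \<in> borel_measurable N"
  shows "(\<lambda>z. DH (a z) (b z) (c z)) \<in> borel_measurable N"
proof -
  have "(\<lambda>z. (a z, b z, c z)) \<in> N \<rightarrow>\<^sub>M borel \<Otimes>\<^sub>M (borel \<Otimes>\<^sub>M borel)"
    by measurable
  then have abc: "(\<lambda>z. (a z, b z, c z)) \<in> borel_measurable N"
    unfolding borel_prod .
  have "(\<lambda>(x, p, y). DH x p y) \<in> borel_measurable borel"
    using assms(1) unfolding admissible_LD_def by blast
  from measurable_compose[OF abc this] show ?thesis
    by simp
qed

text \<open>Two admissible versions agree \<open>law M X\<close>-almost everywhere for each fixed \<open>(x, p)\<close>, hence, for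
  almost every second argument, simultaneously at \<open>(x, p)\<close> and along the countably many points
  \<open>x + 1/(n+1)\<close> and \<open>p + 1/(n+1)\<close>, which determine the partial derivatives.\<close>
lemma admissible_LD_partials_AE_eq:
  fixes X :: "'a \<Rightarrow> real \<times> real" and a b :: "'a \<Rightarrow> real"
  assumes M: "prob_space M" and X: "L2v M X"
    and DH: "admissible_LD M H (law M X) DH" and G: "admissible_LD M H (law M X) G"
    and [measurable]: "a \<in> borel_measurable M" "b \<in> borel_measurable M"
  shows "AE z in M \<Otimes>\<^sub>M M. \<forall>\<pi>\<in>{fst, snd}.
    deriv (\<lambda>x. \<pi> (DH x (b (fst z)) (X (snd z)))) (a (fst z))
      = deriv (\<lambda>x. \<pi> (G x (b (fst z)) (X (snd z)))) (a (fst z)) \<and>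
    deriv (\<lambda>p. \<pi> (DH (a (fst z)) p (X (snd z)))) (b (fst z))
      = deriv (\<lambda>p. \<pi> (G (a (fst z)) p (X (snd z)))) (b (fst z))"
proof -
  interpret pair_sigma_finite M M
    using M by (simp add: pair_sigma_finite_def prob_space_imp_sigma_finite)
  have [measurable]: "X \<in> borel_measurable M"
    using X by (simp add: L2v_def)
  define agree where "agree x p y \<longleftrightarrow> DH x p y = G x p y \<and>
    (\<forall>n. DH (x + inverse (real (Suc n))) p y = G (x + inverse (real (Suc n))) p y \<and>
         DH x (p + inverse (real (Suc n))) y = G x (p + inverse (real (Suc n))) y)" for x p y
  have partials: "deriv (\<lambda>x. \<pi> (DH x p y)) x = deriv (\<lambda>x. \<pi> (G x p y)) x \<and>
      deriv (\<lambda>p. \<pi> (DH x p y)) p = deriv (\<lambda>p. \<pi> (G x p y)) p"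
    if "agree x p y" and "\<pi> \<in> {fst, snd}" for x p y and \<pi> :: "real \<times> real \<Rightarrow> real"
  proof -
    have "bounded_linear \<pi>"
      using that(2) bounded_linear_fst bounded_linear_snd by blast
    then have diff: "(\<lambda>t. \<pi> (F t)) differentiable (at t0)" if "F differentiable (at t0)" for F t0
      using differentiable_compose[OF bounded_linear_imp_differentiable that] by blast
    have "(\<lambda>t. F t p y) differentiable (at x)" "(\<lambda>t. F x t y) differentiable (at p)" if "F \<in> {DH, G}" for F
      using that DH G unfolding admissible_LD_def by blast+
    then show ?thesis
      using that(1) unfolding agree_def
      by (intro conjI deriv_eq_if_eq_on_sequence diff) auto
  qed
  have "AE z in M \<Otimes>\<^sub>M M. agree (a (fst z)) (b (fst z)) (X (snd z))"
  proof (rule AE_pair_measure)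
    show "{z \<in> space (M \<Otimes>\<^sub>M M). agree (a (fst z)) (b (fst z)) (X (snd z))} \<in> sets (M \<Otimes>\<^sub>M M)"
      unfolding agree_def
      by (intro sets.sets_Collect_conj sets.sets_Collect_countable_All measurable_equality_set
          admissible_LD_measurable_comp[OF DH] admissible_LD_measurable_comp[OF G]) measurable
    have "AE \<omega>' in M. DH x p (X \<omega>') = G x p (X \<omega>')" for x p
      using DH G by (intro lions_deriv_unique_AE[OF X, where U = "H x p"]) (simp_all add: admissible_LD_def)
    then show "AE \<omega> in M. AE \<omega>' in M. agree (a (fst (\<omega>, \<omega>'))) (b (fst (\<omega>, \<omega>'))) (X (snd (\<omega>, \<omega>')))"
      by (simp add: agree_def AE_conj_iff AE_all_countable)
  qed
  then show ?thesis
    by (rule eventually_mono) (simp add: partials)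
qed

lemma LLH_integrand_AE_eq:
  assumes M: "prob_space M" and X: "L2v M (\<lambda>\<omega>. (\<xi> \<omega>, \<phi> (\<xi> \<omega>)))"
    and DH: "admissible_LD M H \<rho> DH" and G: "admissible_LD M H \<rho> G"
    and \<rho>: "\<rho> = law M (\<lambda>\<omega>. (\<xi> \<omega>, \<phi> (\<xi> \<omega>)))"
  shows "AE z in M \<Otimes>\<^sub>M M. LLH_integrand H \<rho> \<xi> \<eta> \<gamma> \<zeta> \<phi> DH z = LLH_integrand H \<rho> \<xi> \<eta> \<gamma> \<zeta> \<phi> G z"
proof -
  have "(\<lambda>\<omega>. (\<xi> \<omega>, \<phi> (\<xi> \<omega>))) \<in> borel_measurable M"
    using X by (simp add: L2v_def)
  from measurable_compose[OF this measurable_fst_borel] measurable_compose[OF this measurable_snd_borel]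
  have "\<xi> \<in> borel_measurable M" "(\<lambda>\<omega>. \<phi> (\<xi> \<omega>)) \<in> borel_measurable M"
    by simp_all
  from admissible_LD_partials_AE_eq[OF M X DH[unfolded \<rho>] G[unfolded \<rho>] this] show ?thesis
    by (rule eventually_mono) (auto simp: LLH_integrand_def Let_def split: prod.split)
qed

lemma objective_Ex_complete_square:
  "p * bEx b1 b2 x a \<nu> + fEx c1 c2 c3 f1 x a \<nu> =
     p * bEx b1 b2 x (p + c1 * mean2 \<nu>) \<nu> + fEx c1 c2 c3 f1 x (p + c1 * mean2 \<nu>) \<nu>
     + (a - (p + c1 * mean2 \<nu>))\<^sup>2 / 2"
  by (simp add: bEx_def fEx_def power2_eq_square field_simps)

lemma is_minimizer_Ex_iff:
  "is_minimizer (bEx b1 b2) (fEx c1 c2 c3 f1) x p \<nu> a \<longleftrightarrow> a = p + c1 * mean2 \<nu>"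
proof
  assume "is_minimizer (bEx b1 b2) (fEx c1 c2 c3 f1) x p \<nu> a"
  then have "p * bEx b1 b2 x a \<nu> + fEx c1 c2 c3 f1 x a \<nu>
      \<le> p * bEx b1 b2 x (p + c1 * mean2 \<nu>) \<nu> + fEx c1 c2 c3 f1 x (p + c1 * mean2 \<nu>) \<nu>"
    unfolding is_minimizer_def by blast
  then have "(a - (p + c1 * mean2 \<nu>))\<^sup>2 \<le> 0"
    using objective_Ex_complete_square[of p b1 b2 x a \<nu> c1 c2 c3 f1] by linarith
  then show "a = p + c1 * mean2 \<nu>"
    by simp
next
  assume a: "a = p + c1 * mean2 \<nu>"
  show "is_minimizer (bEx b1 b2) (fEx c1 c2 c3 f1) x p \<nu> a"
    unfolding is_minimizer_def
  proof
    fix a'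
    show "p * bEx b1 b2 x a \<nu> + fEx c1 c2 c3 f1 x a \<nu> \<le> p * bEx b1 b2 x a' \<nu> + fEx c1 c2 c3 f1 x a' \<nu>"
      unfolding a using objective_Ex_complete_square[of p b1 b2 x a' \<nu> c1 c2 c3 f1]
        zero_le_power2[of "a' - (p + c1 * mean2 \<nu>)"] by linarith
  qed
qed

lemma minimizer_Ex: "minimizer (bEx b1 b2) (fEx c1 c2 c3 f1) x p \<nu> = p + c1 * mean2 \<nu>"
  by (simp add: minimizer_def is_minimizer_Ex_iff)

lemma Ham_Ex:
  "Ham (bEx b1 b2) (fEx c1 c2 c3 f1) x p \<nu> =
     p * bEx b1 b2 x (p + c1 * mean2 \<nu>) \<nu> + fEx c1 c2 c3 f1 x (p + c1 * mean2 \<nu>) \<nu>"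
proof -
  have "is_minimizer (bEx b1 b2) (fEx c1 c2 c3 f1) x p \<nu> (p + c1 * mean2 \<nu>)"
    by (simp add: is_minimizer_Ex_iff)
  then show ?thesis
    unfolding Ham_def is_minimizer_def by (intro cInf_eq_minimum) auto
qed

lemma (in prob_space) is_fixed_point_Ex_iff:
  assumes c1: "c1 \<noteq> 1" and \<xi>: "L2 M \<xi>" and \<eta>: "L2 M \<eta>"
  shows "is_fixed_point M (bEx b1 b2) (fEx c1 c2 c3 f1) \<xi> \<eta> \<nu>
    \<longleftrightarrow> \<nu> = law M (\<lambda>\<omega>. (\<xi> \<omega>, c1 / (1 - c1) * expectation \<eta> + \<eta> \<omega>))"
proof -
  have [measurable]: "\<xi> \<in> borel_measurable M" "\<eta> \<in> borel_measurable M"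
    using \<xi> \<eta> by (simp_all add: L2_borel_measurable)
  have mean2_shift: "mean2 (law M (\<lambda>\<omega>. (\<xi> \<omega>, c + \<eta> \<omega>))) = c + expectation \<eta>" for c
    using L2_integrable[OF \<eta>] by (simp add: mean2_law_Pair prob_space)
  show ?thesis
  proof
    assume "is_fixed_point M (bEx b1 b2) (fEx c1 c2 c3 f1) \<xi> \<eta> \<nu>"
    then have \<nu>: "\<nu> = law M (\<lambda>\<omega>. (\<xi> \<omega>, c1 * mean2 \<nu> + \<eta> \<omega>))"
      by (simp add: is_fixed_point_def minimizer_Ex add.commute)
    then have "mean2 \<nu> = c1 * mean2 \<nu> + expectation \<eta>"
      using mean2_shift by metis
    then have "mean2 \<nu> * (1 - c1) = expectation \<eta>"
      by (simp add: algebra_simps)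
    then have "mean2 \<nu> = expectation \<eta> / (1 - c1)"
      using c1 by (simp add: eq_divide_eq)
    then have "c1 * mean2 \<nu> = c1 / (1 - c1) * expectation \<eta>"
      by simp
    with \<nu> show "\<nu> = law M (\<lambda>\<omega>. (\<xi> \<omega>, c1 / (1 - c1) * expectation \<eta> + \<eta> \<omega>))"
      by simp
  next
    assume \<nu>: "\<nu> = law M (\<lambda>\<omega>. (\<xi> \<omega>, c1 / (1 - c1) * expectation \<eta> + \<eta> \<omega>))"
    have "P2 \<nu>"
      unfolding \<nu> by (intro P2_law L2v_Pair \<xi> L2_add_const \<eta>)
    moreover have mean2_\<nu>: "c1 * mean2 \<nu> = c1 / (1 - c1) * expectation \<eta>"
    proof -
      have "mean2 \<nu> = c1 / (1 - c1) * expectation \<eta> + expectation \<eta>"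
        unfolding \<nu> by (rule mean2_shift)
      also have "\<dots> = expectation \<eta> / (1 - c1)"
        using c1 by (simp add: field_simps)
      finally show ?thesis
        by simp
    qed
    moreover have "\<nu> = law M (\<lambda>\<omega>. (\<xi> \<omega>, \<eta> \<omega> + c1 * mean2 \<nu>))"
      by (subst mean2_\<nu>) (simp add: \<nu> add.commute)
    ultimately show "is_fixed_point M (bEx b1 b2) (fEx c1 c2 c3 f1) \<xi> \<eta> \<nu>"
      by (simp add: is_fixed_point_def minimizer_Ex)
  qed
qed

lemma (in prob_space) assumption_F_Ex:
  "c1 \<noteq> 1 \<Longrightarrow> assumption_F M (bEx b1 b2) (fEx c1 c2 c3 f1)"
  by (simp add: assumption_F_def is_minimizer_Ex_iff is_fixed_point_Ex_iff L2_sigma_def)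

lemma (in prob_space) PhiF_Ex:
  "c1 \<noteq> 1 \<Longrightarrow> L2 M \<xi> \<Longrightarrow> L2 M \<eta> \<Longrightarrow>
    PhiF M (bEx b1 b2) (fEx c1 c2 c3 f1) \<xi> \<eta> = law M (\<lambda>\<omega>. (\<xi> \<omega>, c1 / (1 - c1) * expectation \<eta> + \<eta> \<omega>))"
  by (simp add: PhiF_def is_fixed_point_Ex_iff)

lemma (in prob_space) Ham_Ex_law:
  assumes c1: "c1 \<noteq> 1" and [measurable]: "\<xi> \<in> borel_measurable M" and \<eta>: "integrable M \<eta>"
  shows "Ham (bEx b1 b2) (fEx c1 c2 c3 f1) x p (law M (\<lambda>\<omega>. (\<xi> \<omega>, c1 / (1 - c1) * expectation \<eta> + \<eta> \<omega>)))
    = HhatEx c1 c2 c3 b1 b2 f1 x p (law M (\<lambda>\<omega>. (\<xi> \<omega>, \<eta> \<omega>)))"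
proof -
  have [measurable]: "\<eta> \<in> borel_measurable M"
    using \<eta> by simp
  let ?\<nu> = "law M (\<lambda>\<omega>. (\<xi> \<omega>, c1 / (1 - c1) * expectation \<eta> + \<eta> \<omega>))"
  have mean2_\<nu>: "mean2 ?\<nu> = 1 / (1 - c1) * expectation \<eta>"
    using \<eta> c1 by (simp add: mean2_law_Pair prob_space field_simps)
  have "c1 * mean2 ?\<nu> = c1 / (1 - c1) * expectation \<eta>"
    unfolding mean2_\<nu> by simp
  then show ?thesis
    unfolding Ham_Ex HhatEx_def bEx_def fEx_def Let_def mean2_\<nu>
    by (simp add: mean1_law_Pair mean2_law_Pair power2_eq_square field_simps)
qed

definition HhatEx_means :: "real \<Rightarrow> real \<Rightarrow> real \<Rightarrow> (real \<times> real \<Rightarrow> real) \<Rightarrow> (real \<Rightarrow> real)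
    \<Rightarrow> (real \<Rightarrow> real) \<Rightarrow> real \<Rightarrow> real \<Rightarrow> real \<times> real \<Rightarrow> real" where
  "HhatEx_means c1 c2 c3 b1 b2 f1 x p m =
     (let ch1 = c1 / (1 - c1); cb1 = 1 / (1 - c1); ch3 = c3 / (1 - c1) in
      - (1/2) * (ch1 * snd m + p)\<^sup>2 + p * (b1 (fst m, cb1 * snd m) + b2 x)
      + c2 * x * fst m + ch3 * x * snd m + f1 x)"

definition HhatEx_grad :: "real \<Rightarrow> real \<Rightarrow> real \<Rightarrow> (real \<times> real \<Rightarrow> real) \<Rightarrow> (real \<times> real \<Rightarrow> real)
    \<Rightarrow> real \<Rightarrow> real \<Rightarrow> real \<times> real \<Rightarrow> real \<times> real" where
  "HhatEx_grad c1 c2 c3 D1b1 D2b1 x p m =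
     (let ch1 = c1 / (1 - c1); cb1 = 1 / (1 - c1); ch3 = c3 / (1 - c1); m' = (fst m, cb1 * snd m) in
      (p * D1b1 m' + c2 * x, - ch1 * (ch1 * snd m + p) + cb1 * p * D2b1 m' + ch3 * x))"

lemma HhatEx_eq_means: "HhatEx c1 c2 c3 b1 b2 f1 x p \<nu> = HhatEx_means c1 c2 c3 b1 b2 f1 x p (mean1 \<nu>, mean2 \<nu>)"
  by (simp add: HhatEx_def HhatEx_means_def)

lemma HhatEx_means_has_derivative:
  assumes b1: "\<And>m. (b1 has_derivative (\<lambda>h. D1b1 m * fst h + D2b1 m * snd h)) (at m)"
  shows "(HhatEx_means c1 c2 c3 b1 b2 f1 x p has_derivative (\<lambda>h. HhatEx_grad c1 c2 c3 D1b1 D2b1 x p m \<bullet> h)) (at m)"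
proof -
  define ch1 cb1 ch3 where "ch1 = c1 / (1 - c1)" and "cb1 = 1 / (1 - c1)" and "ch3 = c3 / (1 - c1)"
  have "((\<lambda>m. (fst m, cb1 * snd m)) has_derivative (\<lambda>h. (fst h, cb1 * snd h))) (at m)"
    by (intro derivative_intros)
  from has_derivative_compose[OF this b1]
  have "((\<lambda>m. b1 (fst m, cb1 * snd m)) has_derivative
      (\<lambda>h. D1b1 (fst m, cb1 * snd m) * fst h + D2b1 (fst m, cb1 * snd m) * (cb1 * snd h))) (at m)"
    by simp
  then show ?thesis
    unfolding HhatEx_means_def HhatEx_grad_def Let_def ch1_def[symmetric] cb1_def[symmetric] ch3_def[symmetric]
    by (auto intro!: derivative_eq_intros simp: inner_prod_def power2_eq_square algebra_simps)
qed

lemma lions_deriv_HhatEx: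
  assumes "prob_space M" and "finite_measure \<rho>"
    and "\<And>m. (b1 has_derivative (\<lambda>h. D1b1 m * fst h + D2b1 m * snd h)) (at m)"
  shows "lions_deriv M (HhatEx c1 c2 c3 b1 b2 f1 x p) \<rho>
    (\<lambda>_. HhatEx_grad c1 c2 c3 D1b1 D2b1 x p (mean1 \<rho>, mean2 \<rho>))"
  by (rule lions_deriv_of_means[OF assms(1,2) HhatEx_eq_means HhatEx_means_has_derivative[OF assms(3)]])

lemma admissible_LD_HhatEx:
  assumes "prob_space M" and "finite_measure \<rho>"
    and "\<And>m. (b1 has_derivative (\<lambda>h. D1b1 m * fst h + D2b1 m * snd h)) (at m)"
  shows "admissible_LD M (HhatEx c1 c2 c3 b1 b2 f1) \<rho>
    (\<lambda>x p _. HhatEx_grad c1 c2 c3 D1b1 D2b1 x p (mean1 \<rho>, mean2 \<rho>))"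
  unfolding admissible_LD_def
proof (intro conjI allI)
  show "lions_deriv M (HhatEx c1 c2 c3 b1 b2 f1 x p) \<rho> (\<lambda>_. HhatEx_grad c1 c2 c3 D1b1 D2b1 x p (mean1 \<rho>, mean2 \<rho>))"
    for x p
    by (rule lions_deriv_HhatEx[OF assms])
  show "(\<lambda>(x, p, _). HhatEx_grad c1 c2 c3 D1b1 D2b1 x p (mean1 \<rho>, mean2 \<rho>)) \<in> borel_measurable borel"
    unfolding HhatEx_grad_def Let_def case_prod_beta'
    by (intro borel_measurable_continuous_onI continuous_intros)
  show "(\<lambda>x'. HhatEx_grad c1 c2 c3 D1b1 D2b1 x' p (mean1 \<rho>, mean2 \<rho>)) differentiable (at x)"
    "(\<lambda>p'. HhatEx_grad c1 c2 c3 D1b1 D2b1 x p' (mean1 \<rho>, mean2 \<rho>)) differentiable (at p)" for x p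
    unfolding HhatEx_grad_def Let_def by (intro differentiableI) (rule derivative_intros)+
qed

lemma HhatEx_grad_partials:
  fixes c1 c3 :: real and m :: "real \<times> real"
  defines "ch1 \<equiv> c1 / (1 - c1)" and "cb1 \<equiv> 1 / (1 - c1)" and "ch3 \<equiv> c3 / (1 - c1)"
    and "m' \<equiv> (fst m, 1 / (1 - c1) * snd m)"
  shows "deriv (\<lambda>x. fst (HhatEx_grad c1 c2 c3 D1b1 D2b1 x p m)) x = c2"
    and "deriv (\<lambda>x. snd (HhatEx_grad c1 c2 c3 D1b1 D2b1 x p m)) x = ch3"
    and "deriv (\<lambda>p. fst (HhatEx_grad c1 c2 c3 D1b1 D2b1 x p m)) p = D1b1 m'"
    and "deriv (\<lambda>p. snd (HhatEx_grad c1 c2 c3 D1b1 D2b1 x p m)) p = cb1 * D2b1 m' - ch1"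
  unfolding HhatEx_grad_def Let_def m'_def[symmetric]
  unfolding ch1_def[symmetric] cb1_def[symmetric] ch3_def[symmetric]
  by (rule DERIV_imp_deriv, auto intro!: derivative_eq_intros)+

lemma deriv2_HhatEx: "deriv (deriv (\<lambda>p. HhatEx c1 c2 c3 b1 b2 f1 x p \<rho>)) p = -1"
proof -
  define k where "k = c1 / (1 - c1) * mean2 \<rho>"
  define C where "C = b1 (mean1 \<rho>, 1 / (1 - c1) * mean2 \<rho>) + b2 x"
  have "deriv (\<lambda>p. HhatEx c1 c2 c3 b1 b2 f1 x p \<rho>) q = C - (k + q)" for q
    unfolding HhatEx_def Let_def power2_abs k_def[symmetric] C_def[symmetric]
    by (rule DERIV_imp_deriv) (auto intro!: derivative_eq_intros simp: power2_eq_square algebra_simps)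
  then have "deriv (\<lambda>p. HhatEx c1 c2 c3 b1 b2 f1 x p \<rho>) = (\<lambda>q. C - (k + q))"
    by (rule ext)
  moreover have "deriv (\<lambda>q. C - (k + q)) p = -1"
    by (rule DERIV_imp_deriv) (auto intro!: derivative_eq_intros)
  ultimately show ?thesis
    by simp
qed

lemma LLH_integrand_HhatEx_grad:
  fixes c1 :: real and m :: "real \<times> real"
  defines "m' \<equiv> (fst m, 1 / (1 - c1) * snd m)"
  shows "LLH_integrand (HhatEx c1 c2 c3 b1 b2 f1) \<rho> \<xi> \<eta> \<gamma> \<zeta> \<phi> (\<lambda>x p _. HhatEx_grad c1 c2 c3 D1b1 D2b1 x p m)
    = (\<lambda>z. - (\<zeta> (fst z))\<^sup>2 - \<eta> (fst z) * (c2 * \<eta> (snd z) + c3 / (1 - c1) * (\<gamma> (snd z) + \<zeta> (snd z)))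
      - (\<gamma> (fst z) - \<zeta> (fst z))
        * (D1b1 m' * \<eta> (snd z) + (1 / (1 - c1) * D2b1 m' - c1 / (1 - c1)) * (\<gamma> (snd z) + \<zeta> (snd z))))"
  by (simp add: fun_eq_iff LLH_integrand_def m'_def HhatEx_grad_partials deriv2_HhatEx power2_eq_square)

lemma borel_measurable_LLH_integrand_HhatEx_grad:
  assumes [measurable]: "\<eta> \<in> borel_measurable M" "\<gamma> \<in> borel_measurable M" "\<zeta> \<in> borel_measurable M"
  shows "LLH_integrand (HhatEx c1 c2 c3 b1 b2 f1) \<rho> \<xi> \<eta> \<gamma> \<zeta> \<phi> (\<lambda>x p _. HhatEx_grad c1 c2 c3 D1b1 D2b1 x p m)
    \<in> borel_measurable (M \<Otimes>\<^sub>M M)"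
  unfolding LLH_integrand_HhatEx_grad by measurable

lemma psd3_matEx_quadratic_form:
  fixes c1 c2 c3 D1 D2 :: real
  assumes "psd3 (matEx c1 c2 c3 D1 D2)"
  defines "s \<equiv> 1 / (1 - c1) * D2 - c1 / (1 - c1)" and "k \<equiv> c3 / (1 - c1)"
  shows "0 \<le> (1 - s) * z\<^sup>2 + s * a\<^sup>2 + c2 * e\<^sup>2 + (k - D1) * z * e + (k + D1) * a * e"
proof -
  have "0 \<le> (vector [z, a, e] :: real^3) \<bullet> (matEx c1 c2 c3 D1 D2 *v vector [z, a, e])"
    using assms(1) unfolding psd3_def by blast
  also have "\<dots> = (1 - s) * z\<^sup>2 + s * a\<^sup>2 + c2 * e\<^sup>2 + (k - D1) * z * e + (k + D1) * a * e"
    unfolding matEx_def Let_def s_def k_def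
    by (simp add: inner_vec_def matrix_vector_mult_def sum_3 vector_3 power2_eq_square algebra_simps)
  finally show ?thesis .
qed

lemma (in prob_space) integral_LLH_quadratic:
  fixes \<eta> \<gamma> \<zeta> :: "'a \<Rightarrow> real"
  assumes \<eta>: "L2 M \<eta>" and \<gamma>: "L2 M \<gamma>" and \<zeta>: "L2 M \<zeta>"
  shows "(\<integral>z. - (\<zeta> (fst z))\<^sup>2 - \<eta> (fst z) * (c * \<eta> (snd z) + k * (\<gamma> (snd z) + \<zeta> (snd z)))
        - (\<gamma> (fst z) - \<zeta> (fst z)) * (d * \<eta> (snd z) + s * (\<gamma> (snd z) + \<zeta> (snd z))) \<partial>(M \<Otimes>\<^sub>M M))
    = - variance \<zeta> - ((1 - s) * (expectation \<zeta>)\<^sup>2 + s * (expectation \<gamma>)\<^sup>2 + c * (expectation \<eta>)\<^sup>2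
        + (k - d) * expectation \<zeta> * expectation \<eta> + (k + d) * expectation \<gamma> * expectation \<eta>)"
proof -
  interpret pair_sigma_finite M M
    by unfold_locales
  have i: "integrable M \<eta>" "integrable M \<gamma>" "integrable M \<zeta>" "integrable M (\<lambda>\<omega>. (\<zeta> \<omega>)\<^sup>2)"
    using \<eta> \<gamma> \<zeta> by (simp_all add: L2_integrable L2_integrable_square)
  define A where "A = (\<lambda>\<omega>. - (\<zeta> \<omega>)\<^sup>2)"
  define B where "B = (\<lambda>\<omega>. - (c * \<eta> \<omega> + d * (\<gamma> \<omega> - \<zeta> \<omega>)))"
  define C where "C = (\<lambda>\<omega>. - (k * \<eta> \<omega> + s * (\<gamma> \<omega> - \<zeta> \<omega>)))"
  define S where "S = (\<lambda>\<omega>. \<gamma> \<omega> + \<zeta> \<omega>)"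
  have iABCS: "integrable M A" "integrable M B" "integrable M C" "integrable M S" "integrable M (\<lambda>_. 1::real)"
    using i by (simp_all add: A_def B_def C_def S_def)
  have I: "integrable (M \<Otimes>\<^sub>M M) (\<lambda>z. A (fst z))" "integrable (M \<Otimes>\<^sub>M M) (\<lambda>z. B (fst z) * \<eta> (snd z))"
    "integrable (M \<Otimes>\<^sub>M M) (\<lambda>z. C (fst z) * S (snd z))"
    using integrable_mult_fst_snd[OF iABCS(1,5)] integrable_mult_fst_snd[OF iABCS(2) i(1)]
      integrable_mult_fst_snd[OF iABCS(3,4)] by simp_all
  have E: "(\<integral>z. A (fst z) \<partial>(M \<Otimes>\<^sub>M M)) = expectation A"
    "(\<integral>z. B (fst z) * \<eta> (snd z) \<partial>(M \<Otimes>\<^sub>M M)) = expectation B * expectation \<eta>"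
    "(\<integral>z. C (fst z) * S (snd z) \<partial>(M \<Otimes>\<^sub>M M)) = expectation C * expectation S"
    using integral_mult_fst_snd[OF iABCS(1,5)] integral_mult_fst_snd[OF iABCS(2) i(1)]
      integral_mult_fst_snd[OF iABCS(3,4)] by (simp_all add: prob_space)
  have "(\<lambda>z. - (\<zeta> (fst z))\<^sup>2 - \<eta> (fst z) * (c * \<eta> (snd z) + k * (\<gamma> (snd z) + \<zeta> (snd z)))
        - (\<gamma> (fst z) - \<zeta> (fst z)) * (d * \<eta> (snd z) + s * (\<gamma> (snd z) + \<zeta> (snd z))))
      = (\<lambda>z. A (fst z) + B (fst z) * \<eta> (snd z) + C (fst z) * S (snd z))"
    by (simp add: fun_eq_iff A_def B_def C_def S_def algebra_simps)
  then have "(\<integral>z. - (\<zeta> (fst z))\<^sup>2 - \<eta> (fst z) * (c * \<eta> (snd z) + k * (\<gamma> (snd z) + \<zeta> (snd z)))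
        - (\<gamma> (fst z) - \<zeta> (fst z)) * (d * \<eta> (snd z) + s * (\<gamma> (snd z) + \<zeta> (snd z))) \<partial>(M \<Otimes>\<^sub>M M))
      = expectation A + expectation B * expectation \<eta> + expectation C * expectation S"
    using I E by simp
  also have "\<dots> = - variance \<zeta> - ((1 - s) * (expectation \<zeta>)\<^sup>2 + s * (expectation \<gamma>)\<^sup>2
      + c * (expectation \<eta>)\<^sup>2 + (k - d) * expectation \<zeta> * expectation \<eta> + (k + d) * expectation \<gamma> * expectation \<eta>)"
    using i by (simp add: A_def B_def C_def S_def variance_eq prob_space power2_eq_square algebra_simps)
  finally show ?thesis .
qed

lemma (in prob_space) integral_LLH_integrand_HhatEx_grad_nonpos:
  fixes c1 :: real and m :: "real \<times> real"
  defines "m' \<equiv> (fst m, 1 / (1 - c1) * snd m)"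
  assumes L2: "L2 M \<eta>" "L2 M \<gamma>" "L2 M \<zeta>" and psd: "psd3 (matEx c1 c2 c3 (D1b1 m') (D2b1 m'))"
  shows "integral\<^sup>L (M \<Otimes>\<^sub>M M)
    (LLH_integrand (HhatEx c1 c2 c3 b1 b2 f1) \<rho> \<xi> \<eta> \<gamma> \<zeta> \<phi> (\<lambda>x p _. HhatEx_grad c1 c2 c3 D1b1 D2b1 x p m)) \<le> 0"
  unfolding LLH_integrand_HhatEx_grad m'_def[symmetric]
  using integral_LLH_quadratic[OF L2, where c = c2 and k = "c3 / (1 - c1)" and d = "D1b1 m'"
      and s = "1 / (1 - c1) * D2b1 m' - c1 / (1 - c1)"]
    variance_positive[of \<zeta>] psd3_matEx_quadratic_form[OF psd, of "expectation \<zeta>" "expectation \<gamma>" "expectation \<eta>"]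
  by linarith

lemma LLH_HhatEx:
  assumes M: "prob_space M"
    and b1: "\<And>m. (b1 has_derivative (\<lambda>h. D1b1 m * fst h + D2b1 m * snd h)) (at m)"
    and psd: "\<And>m1 m2. psd3 (matEx c1 c2 c3 (D1b1 (m1, m2)) (D2b1 (m1, m2)))"
  shows "LLH M (HhatEx c1 c2 c3 b1 b2 f1)"
  unfolding LLH_iff_integrand
proof (intro allI impI conjI)
  interpret prob_space M
    by (fact M)
  fix \<xi> \<eta> \<gamma> \<zeta> :: "'a \<Rightarrow> real" and \<phi> :: "real \<Rightarrow> real"
  assume "L2 M \<xi> \<and> L2 M \<eta> \<and> L2 M \<gamma> \<and> L2 M \<zeta> \<and> (\<exists>K. K-lipschitz_on UNIV \<phi>)"
  then obtain K where \<xi>: "L2 M \<xi>" and L2: "L2 M \<eta>" "L2 M \<gamma>" "L2 M \<zeta>" and \<phi>: "K-lipschitz_on UNIV \<phi>"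
    by blast
  let ?H = "HhatEx c1 c2 c3 b1 b2 f1" and ?\<rho> = "law M (\<lambda>\<omega>. (\<xi> \<omega>, \<phi> (\<xi> \<omega>)))"
  define G where "G = (\<lambda>x p (_ :: real \<times> real). HhatEx_grad c1 c2 c3 D1b1 D2b1 x p (mean1 ?\<rho>, mean2 ?\<rho>))"
  have X: "L2v M (\<lambda>\<omega>. (\<xi> \<omega>, \<phi> (\<xi> \<omega>)))"
    by (intro L2v_Pair \<xi> L2_lipschitz_comp[OF \<xi> \<phi>])
  then have "finite_measure ?\<rho>"
    using P2_law by (simp add: P2_def prob_space.finite_measure)
  then have G: "admissible_LD M ?H ?\<rho> G"
    unfolding G_def by (rule admissible_LD_HhatEx[OF M _ b1])
  then show "\<exists>DH. admissible_LD M ?H ?\<rho> DH"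
    by blast
  show "integral\<^sup>L (M \<Otimes>\<^sub>M M) (LLH_integrand ?H ?\<rho> \<xi> \<eta> \<gamma> \<zeta> \<phi> DH) \<le> 0"
    if DH: "admissible_LD M ?H ?\<rho> DH" for DH
  proof (rule integral_nonpos_if_AE_eq)
    show "AE z in M \<Otimes>\<^sub>M M. LLH_integrand ?H ?\<rho> \<xi> \<eta> \<gamma> \<zeta> \<phi> DH z = LLH_integrand ?H ?\<rho> \<xi> \<eta> \<gamma> \<zeta> \<phi> G z"
      by (rule LLH_integrand_AE_eq[OF M X DH G refl])
    show "LLH_integrand ?H ?\<rho> \<xi> \<eta> \<gamma> \<zeta> \<phi> G \<in> borel_measurable (M \<Otimes>\<^sub>M M)"
      unfolding G_def using L2 by (intro borel_measurable_LLH_integrand_HhatEx_grad L2_borel_measurable)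
    show "integral\<^sup>L (M \<Otimes>\<^sub>M M) (LLH_integrand ?H ?\<rho> \<xi> \<eta> \<gamma> \<zeta> \<phi> G) \<le> 0"
      unfolding G_def by (rule integral_LLH_integrand_HhatEx_grad_nonpos[OF L2], rule psd)
  qed
qed

theorem mainTheorem4:
  fixes M :: "'w measure" and M1 :: "'v measure"
    and c1 c2 c3 :: real
    and b1 :: "real \<times> real \<Rightarrow> real" and D1b1 D2b1 :: "real \<times> real \<Rightarrow> real"
    and b2 f1 :: "real \<Rightarrow> real"
  assumes M: "prob_space M"
    and M1: "prob_space M1" "atomless M1"
    and c1: "0 < c1" "c1 < 1" and c2: "0 < c2" and c3: "0 < c3"
    and b1_C1: "\<And>m. (b1 has_derivative (\<lambda>h. D1b1 m * fst h + D2b1 m * snd h)) (at m)"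
               "continuous_on UNIV D1b1" "continuous_on UNIV D2b1"
    and b2_C1: "\<And>x. b2 differentiable (at x)" "continuous_on UNIV (deriv b2)"
    and f1_C1: "\<And>x. f1 differentiable (at x)" "continuous_on UNIV (deriv f1)"
    and psd: "\<And>m1 m2. psd3 (matEx c1 c2 c3 (D1b1 (m1, m2)) (D2b1 (m1, m2)))"
  shows "assumption_F M (bEx b1 b2) (fEx c1 c2 c3 f1)
    \<and> (\<forall>\<xi> \<eta>. L2 M \<xi> \<and> L2_sigma M \<xi> \<eta> \<longrightarrow>
          PhiF M (bEx b1 b2) (fEx c1 c2 c3 f1) \<xi> \<eta>
            = law M (\<lambda>\<omega>. (\<xi> \<omega>, c1 / (1 - c1) * integral\<^sup>L M \<eta> + \<eta> \<omega>))
        \<and> (\<forall>x p. Ham (bEx b1 b2) (fEx c1 c2 c3 f1) x p (PhiF M (bEx b1 b2) (fEx c1 c2 c3 f1) \<xi> \<eta>)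
                 = HhatEx c1 c2 c3 b1 b2 f1 x p (law M (\<lambda>\<omega>. (\<xi> \<omega>, \<eta> \<omega>)))))
    \<and> LLH M1 (HhatEx c1 c2 c3 b1 b2 f1)"
proof -
  interpret prob_space M
    by (fact M)
  have c1_ne: "c1 \<noteq> 1"
    using c1 by simp
  have Phi_Ham: "PhiF M (bEx b1 b2) (fEx c1 c2 c3 f1) \<xi> \<eta>
        = law M (\<lambda>\<omega>. (\<xi> \<omega>, c1 / (1 - c1) * integral\<^sup>L M \<eta> + \<eta> \<omega>))
      \<and> (\<forall>x p. Ham (bEx b1 b2) (fEx c1 c2 c3 f1) x p (PhiF M (bEx b1 b2) (fEx c1 c2 c3 f1) \<xi> \<eta>)
               = HhatEx c1 c2 c3 b1 b2 f1 x p (law M (\<lambda>\<omega>. (\<xi> \<omega>, \<eta> \<omega>))))"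
    if "L2 M \<xi>" and "L2 M \<eta>" for \<xi> \<eta>
    using PhiF_Ex[OF c1_ne that] Ham_Ex_law[OF c1_ne L2_borel_measurable[OF that(1)] L2_integrable[OF that(2)]]
    by simp
  show ?thesis
    using assumption_F_Ex[OF c1_ne] Phi_Ham LLH_HhatEx[OF M1(1) b1_C1(1) psd]
    unfolding L2_sigma_def by blast
qed

end
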